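(* Let $\theta\in\mathbb{R}^n$, $\sigma^2>0$, $g:\mathbb{R}^n\to\mathbb{R}^n$ measurable, and assume $\mathbb{E}[\|g(Y_\beta)\|_2^2\|Y_\beta-\theta\|_2^{2m}]<\infty$ for $m=0,1$ and some $\beta>0$. Then for all $\alpha\in[0,\beta)$, $$\mathrm{Risk}_\alpha(g)-\mathrm{Risk}(g)=\int_0^\alpha\frac{\sqrt n}{\sqrt2(1+t)}\sqrt{\mathrm{Var}(\|\theta-g(Y_t)\|_2^2)}\;\mathrm{Cor}\big(\|\theta-g(Y_t)\|_2^2,\|Y_t-\theta\|_2^2\big)\,dt$$ (where the product of the standard deviation and the correlation is interpreted as $0$ when the variance vanishes). If moreover $t\mapsto\mathrm{Var}(\|\theta-g(Y_t)\|_2^2)$ is nondecreasing on $[0,\alpha]$, then $$|\mathrm{Risk}_\alpha(g)-\mathrm{Risk}(g)|\le\frac{\sqrt n\,\alpha}{\sqrt2}\sqrt{\mathrm{Var}(\|\theta-g(Y_\alpha)\|_2^2)}.$$ If in addition $\mathbb{E}[\|g(Y_\beta)\|_2^4\|Y_\beta-\theta\|_2^{2m}]<\infty$ for $m=0,1$, then for all $\alpha\in[0,\beta)$, $$|\mathrm{Risk}_\alpha(g)-\mathrm{Risk}(g)|\le\frac{\sqrt n\,\alpha}{\sqrt2}\sqrt{\mathrm{Var}(\|\theta-g(Y)\|_2^2)}+O(\alpha^{3/2}),$$ where $O(\alpha^{3/2})$ denotes a quantity bounded by $C\alpha^{3/2}$ for some constant $C>0$ and all sufficiently small $\alpha$.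
   Context: For $\alpha\ge0$, $Y_\alpha\sim N(\theta,(1+\alpha)\sigma^2 I_n)$, $Y=Y_0\sim N(\theta,\sigma^2I_n)$, $\mathrm{Risk}_\alpha(g)=\mathbb{E}\|\theta-g(Y_\alpha)\|_2^2$ and $\mathrm{Risk}(g)=\mathrm{Risk}_0(g)$. $\mathrm{Cor}$ denotes Pearson correlation. (By unbiasedness of the CB estimator for $\mathrm{Risk}_\alpha(g)$, this difference is the bias of the CB estimator as an estimator of $\mathrm{Risk}(g)$.) *)

theory Defs
  imports "HOL-Probability.Probability"
begin

(* Law of Y ~ N(theta, v I_n) on R^n (here real^'n, n = CARD('n)):
   density w.r.t. Lebesgue measure = product of 1-d normal densities
   with mean theta$i and standard deviation sqrt v. *)
definition gauss :: "real^'n::finite \<Rightarrow> real \<Rightarrow> (real^'n) measure" where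
  "gauss \<theta> v = density lborel
     (\<lambda>x. ennreal (\<Prod>i\<in>UNIV. normal_density (\<theta>$i) (sqrt v) (x$i)))"

definition risk :: "real^'n::finite \<Rightarrow> real \<Rightarrow> (real^'n \<Rightarrow> real^'n) \<Rightarrow> real \<Rightarrow> real" where
  "risk \<theta> \<sigma>2 g \<alpha> = (\<integral>y. (norm (\<theta> - g y))\<^sup>2 \<partial>(gauss \<theta> ((1 + \<alpha>) * \<sigma>2)))"

(* Variance, valued in [0, infinity] so that an infinite variance is represented faithfully *)
definition var_ext :: "'a measure \<Rightarrow> ('a \<Rightarrow> real) \<Rightarrow> ennreal" where
  "var_ext M X = (\<integral>\<^sup>+ x. ennreal ((X x - (\<integral>y. X y \<partial>M))\<^sup>2) \<partial>M)"

definition var_real :: "'a measure \<Rightarrow> ('a \<Rightarrow> real) \<Rightarrow> real" where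
  "var_real M X = enn2real (var_ext M X)"

definition covar :: "'a measure \<Rightarrow> ('a \<Rightarrow> real) \<Rightarrow> ('a \<Rightarrow> real) \<Rightarrow> real" where
  "covar M X W = (\<integral>x. (X x - (\<integral>y. X y \<partial>M)) * (W x - (\<integral>y. W y \<partial>M)) \<partial>M)"

(* Pearson correlation (with the Isabelle convention z / 0 = 0) *)
definition pearson_cor :: "'a measure \<Rightarrow> ('a \<Rightarrow> real) \<Rightarrow> ('a \<Rightarrow> real) \<Rightarrow> real" where
  "pearson_cor M X W = covar M X W / (sqrt (var_real M X) * sqrt (var_real M W))"

(* sqrt(Var X) * Cor(X,W); interpreted as 0 when Var X = 0 (automatic from z/0 = 0),
   and, when Var X = infinity, as the limiting value Cov(X,W)/sqrt(Var W)
   obtained by cancelling sqrt(Var X). *)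
definition sd_times_cor :: "'a measure \<Rightarrow> ('a \<Rightarrow> real) \<Rightarrow> ('a \<Rightarrow> real) \<Rightarrow> real" where
  "sd_times_cor M X W =
     (if var_ext M X < \<infinity> then sqrt (var_real M X) * pearson_cor M X W
      else covar M X W / sqrt (var_real M W))"

end

theory Submission
  imports Defs
begin

text \<open>
  Write \<open>p\<^sub>t\<close> for the density of \<open>N(\<theta>, (1 + t) \<sigma>\<^sup>2 I\<^sub>n)\<close> and \<open>W = \<parallel>Y - \<theta>\<parallel>\<^sup>2\<close>. Differentiating in \<open>t\<close>,
  \<open>\<partial>\<^sub>t p\<^sub>t = p\<^sub>t (W / (2 \<sigma>\<^sup>2 (1 + t)\<^sup>2) - n / (2 (1 + t)))\<close>, so for any \<open>X\<close> the derivative of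
  \<open>E\<^sub>t X\<close> is \<open>Cov\<^sub>t(X, W) / (2 \<sigma>\<^sup>2 (1 + t)\<^sup>2)\<close>; since \<open>Var\<^sub>t W = 2 n (1 + t)\<^sup>2 \<sigma>\<^sup>4\<close>, this is
  \<open>\<surd>n / (\<surd>2 (1 + t)) \<cdot> sd\<^sub>t(X) Cor\<^sub>t(X, W)\<close>. The bound \<open>p\<^sub>t \<le> (1 + \<beta>)\<^bsup>n/2\<^esup> p\<^sub>\<beta>\<close> dominates
  everything by the moment hypotheses at \<open>\<beta>\<close>, so Fubini turns the pointwise fundamental theorem
  of calculus into the integral formula for \<open>X = \<parallel>\<theta> - g(Y)\<parallel>\<^sup>2\<close>. By Cauchy--Schwarz the integrand is
  at most \<open>\<surd>n/\<surd>2 \<cdot> sd\<^sub>t(X)\<close>, which gives the second bound when \<open>Var\<^sub>t X\<close> is nondecreasing. With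
  fourth moments the same argument applied to \<open>X\<close> and \<open>X\<^sup>2\<close> shows that \<open>Var\<^sub>t X\<close> grows at most
  linearly in \<open>t\<close>, hence \<open>sd\<^sub>t(X) \<le> sd\<^sub>0(X) + O(\<surd>t)\<close>, and integrating gives the \<open>O(\<alpha>\<^sup>3\<^sup>/\<^sup>2)\<close> remainder.
\<close>

lemma norm_diff_power_le: "norm (a - b) ^ k \<le> 2 ^ k * (norm a ^ k + norm b ^ k)"
proof -
  have "norm (a - b) \<le> 2 * max (norm a) (norm b)"
    using norm_triangle_ineq4[of a b] by linarith
  then have "norm (a - b) ^ k \<le> (2 * max (norm a) (norm b)) ^ k"
    by (rule power_mono) simp
  also have "\<dots> \<le> 2 ^ k * (norm a ^ k + norm b ^ k)"
    unfolding power_mult_distrib by (intro mult_left_mono) (auto simp: max_def)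
  finally show ?thesis .
qed

lemma integrable_norm_diff_power_mult:
  fixes g :: "'a \<Rightarrow> 'b::{real_normed_vector, second_countable_topology}" and w :: "'a \<Rightarrow> real"
  assumes [measurable]: "g \<in> borel_measurable M" "w \<in> borel_measurable M" and w: "\<And>y. 0 \<le> w y"
    and "integrable M w" "integrable M (\<lambda>y. norm (g y) ^ k * w y)"
  shows "integrable M (\<lambda>y. norm (c - g y) ^ k * w y)"
proof (rule Bochner_Integration.integrable_bound)
  show "integrable M (\<lambda>y. 2 ^ k * (norm c ^ k * w y + norm (g y) ^ k * w y))"
    using assms by auto
  show "AE y in M. norm (norm (c - g y) ^ k * w y) \<le> norm (2 ^ k * (norm c ^ k * w y + norm (g y) ^ k * w y))"
    using mult_right_mono[OF norm_diff_power_le w] w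
    by (intro AE_I2) (simp add: abs_mult distrib_right mult.assoc)
qed measurable

lemma powr_three_halves: "0 \<le> (x::real) \<Longrightarrow> x powr (3/2) = x * sqrt x"
  using powr_add[of x 1 "1/2"] by (cases "x = 0") (simp_all add: powr_half_sqrt)

lemma abs_set_integral_Icc_le:
  fixes h :: "real \<Rightarrow> real"
  assumes "0 \<le> \<alpha>" and "set_integrable lborel {0..\<alpha>} h" and "\<And>t. t \<in> {0..\<alpha>} \<Longrightarrow> \<bar>h t\<bar> \<le> M"
  shows "\<bar>LINT t:{0..\<alpha>}|lborel. h t\<bar> \<le> M * \<alpha>"
proof -
  have "\<bar>LINT t:{0..\<alpha>}|lborel. h t\<bar> \<le> (LINT t:{0..\<alpha>}|lborel. \<bar>h t\<bar>)"
    using set_integral_norm_bound[OF assms(2)] by simp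
  also have "\<dots> \<le> (LINT t:{0..\<alpha>}|lborel. M)"
    using assms borel_integrable_atLeastAtMost'[OF continuous_on_const]
    by (intro set_integral_mono set_integrable_abs) auto
  also have "\<dots> = M * \<alpha>"
    using assms(1) by (simp add: set_integral_const)
  finally show ?thesis .
qed

lemma lborel_pair_measurable:
  "f \<in> borel_measurable (borel \<Otimes>\<^sub>M borel) \<Longrightarrow> f \<in> borel_measurable (lborel \<Otimes>\<^sub>M lborel)"
  by (subst measurable_cong_sets[OF sets_pair_measure_cong[OF sets_lborel sets_lborel] refl])

lemma prod_indicator_power:
  "(\<Prod>i\<in>(UNIV::'n::finite set). f i ^ (if i = j then 1 else 0)) = f j"
  by (subst prod.cong[OF refl, where h="\<lambda>i. if i = j then f i else 1"]) auto

lemma norm_vec_power2: "(norm (x::real^'n::finite))\<^sup>2 = (\<Sum>i\<in>UNIV. (x$i)\<^sup>2)"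
  unfolding norm_vec_def L2_set_def by (simp add: sum_nonneg)

lemma nn_integral_lborel_vec_prod:
  fixes h :: "'n::finite \<Rightarrow> real \<Rightarrow> real"
  assumes "\<And>i. h i \<in> borel_measurable borel" and "\<And>i x. 0 \<le> h i x"
  shows "(\<integral>\<^sup>+x. ennreal (\<Prod>i\<in>UNIV. h i (x$i)) \<partial>(lborel::(real^'n) measure))
         = (\<Prod>i\<in>UNIV. \<integral>\<^sup>+x. ennreal (h i x) \<partial>lborel)"
proof -
  define f where "f b x = ennreal (h (THE i. b = axis i (1::real)) x)" for b :: "real^'n" and x
  have f_axis: "f (axis i 1) = (\<lambda>x. ennreal (h i x))" for i
    unfolding f_def by (auto simp: axis_eq_axis)
  have Basis: "(Basis :: (real^'n) set) = (\<lambda>i. axis i 1) ` UNIV"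
    unfolding Basis_vec_def by auto
  have inj: "inj (\<lambda>i::'n. axis i (1::real))"
    by (auto simp: inj_def axis_eq_axis)
  have "(\<integral>\<^sup>+x. (\<Prod>b\<in>Basis. f b (x \<bullet> b)) \<partial>(lborel::(real^'n) measure))
        = (\<Prod>b\<in>Basis. \<integral>\<^sup>+x. f b x \<partial>lborel)"
    by (rule nn_integral_lborel_prod) (auto simp: Basis f_axis assms)
  then show ?thesis
    unfolding Basis prod.reindex[OF inj] by (simp add: f_axis inner_axis prod_ennreal assms)
qed

section \<open>Variance and covariance\<close>

lemma var_real_nonneg [simp]: "0 \<le> var_real M X"
  unfolding var_real_def by simp

lemma var_real_pos_iff: "var_ext M X < \<infinity> \<Longrightarrow> 0 < var_real M X \<longleftrightarrow> var_ext M X \<noteq> 0"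
  unfolding var_real_def by (auto simp: enn2real_positive_iff top.not_eq_extremum zero_less_iff_neq_zero)

lemma
  fixes X :: "'a \<Rightarrow> real"
  assumes [measurable]: "X \<in> borel_measurable M" and fin: "var_ext M X < \<infinity>"
  shows integrable_centered_sq_if_var_ext_finite: "integrable M (\<lambda>x. (X x - integral\<^sup>L M X)\<^sup>2)"
    and var_real_eq_integral: "var_real M X = (\<integral>x. (X x - integral\<^sup>L M X)\<^sup>2 \<partial>M)"
proof -
  show I: "integrable M (\<lambda>x. (X x - integral\<^sup>L M X)\<^sup>2)"
    using fin unfolding var_ext_def by (auto simp: integrable_iff_bounded)
  have "var_ext M X = ennreal (\<integral>x. (X x - integral\<^sup>L M X)\<^sup>2 \<partial>M)"
    unfolding var_ext_def by (rule nn_integral_eq_integral[OF I]) simp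
  then show "var_real M X = (\<integral>x. (X x - integral\<^sup>L M X)\<^sup>2 \<partial>M)"
    unfolding var_real_def by simp
qed

lemma covar_eq_0_if_var_ext_eq_0:
  assumes [measurable]: "X \<in> borel_measurable M" and "var_ext M X = 0"
  shows "covar M X W = 0"
proof -
  have "AE x in M. ennreal ((X x - integral\<^sup>L M X)\<^sup>2) = 0"
    using assms(2) unfolding var_ext_def by (subst (asm) nn_integral_0_iff_AE) auto
  then have "AE x in M. (X x - integral\<^sup>L M X) * (W x - integral\<^sup>L M W) = 0"
    by eventually_elim simp
  then show ?thesis
    unfolding covar_def by (simp add: integral_eq_zero_AE)
qed

lemma sd_times_cor_eq_covar_div:
  assumes [measurable]: "X \<in> borel_measurable M"
  shows "sd_times_cor M X W = covar M X W / sqrt (var_real M W)"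
proof (cases "var_ext M X < \<infinity>")
  case True
  show ?thesis
  proof (cases "var_ext M X = 0")
    case True
    then show ?thesis
      unfolding sd_times_cor_def pearson_cor_def var_real_def
      by (simp add: covar_eq_0_if_var_ext_eq_0)
  next
    case False
    then have "0 < sqrt (var_real M X)" using var_real_pos_iff[OF True] by simp
    then show ?thesis unfolding sd_times_cor_def pearson_cor_def using True by simp
  qed
qed (simp add: sd_times_cor_def)

lemma abs_covar_le_sqrt_var:
  assumes [measurable]: "X \<in> borel_measurable M" "W \<in> borel_measurable M"
    and fX: "var_ext M X < \<infinity>" and fW: "var_ext M W < \<infinity>"
    and pX: "0 < var_real M X" and pW: "0 < var_real M W"
  shows "\<bar>covar M X W\<bar> \<le> sqrt (var_real M X) * sqrt (var_real M W)"
proof -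
  define A where "A x = X x - integral\<^sup>L M X" for x
  define B where "B x = W x - integral\<^sup>L M W" for x
  have [measurable]: "A \<in> borel_measurable M" "B \<in> borel_measurable M"
    unfolding A_def B_def by auto
  define l where "l = sqrt (var_real M W) / sqrt (var_real M X)"
  have l: "0 < l" unfolding l_def using pX pW by simp
  have iA: "integrable M (\<lambda>x. (A x)\<^sup>2)" and iB: "integrable M (\<lambda>x. (B x)\<^sup>2)"
    unfolding A_def B_def using fX fW by (simp_all add: integrable_centered_sq_if_var_ext_finite)
  \<comment> \<open>AM-GM with the weight \<open>l\<close> that makes both terms equal after integration\<close>
  have AM_GM: "\<bar>A x * B x\<bar> \<le> (l * (A x)\<^sup>2 + (B x)\<^sup>2 / l) / 2" for x
  proof -
    have "0 \<le> (l * \<bar>A x\<bar> - \<bar>B x\<bar>)\<^sup>2 / l" using l by simp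
    then show ?thesis
      using l by (simp add: power2_eq_square field_simps abs_mult)
  qed
  have iR: "integrable M (\<lambda>x. (l * (A x)\<^sup>2 + (B x)\<^sup>2 / l) / 2)"
    using iA iB by auto
  have iAB: "integrable M (\<lambda>x. A x * B x)"
  proof (rule Bochner_Integration.integrable_bound[OF iR])
    show "AE x in M. norm (A x * B x) \<le> norm ((l * (A x)\<^sup>2 + (B x)\<^sup>2 / l) / 2)"
      by (intro AE_I2) (simp only: real_norm_def, rule order_trans[OF AM_GM abs_ge_self])
  qed measurable
  have "\<bar>covar M X W\<bar> \<le> (\<integral>x. \<bar>A x * B x\<bar> \<partial>M)"
    unfolding covar_def A_def B_def by (rule integral_abs_bound)
  also have "\<dots> \<le> (\<integral>x. (l * (A x)\<^sup>2 + (B x)\<^sup>2 / l) / 2 \<partial>M)"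
    using iAB iR AM_GM by (intro integral_mono) auto
  also have "\<dots> = (l * var_real M X + var_real M W / l) / 2"
    using iA iB fX fW by (simp add: var_real_eq_integral A_def B_def)
  also have "\<dots> = sqrt (var_real M X) * sqrt (var_real M W)"
    using pX pW unfolding l_def by (simp add: field_simps)
  finally show ?thesis .
qed

lemma abs_sd_times_cor_le_sqrt_var:
  assumes [measurable]: "X \<in> borel_measurable M" "W \<in> borel_measurable M"
    and fX: "var_ext M X < \<infinity>" and fW: "var_ext M W < \<infinity>" and pW: "0 < var_real M W"
  shows "\<bar>sd_times_cor M X W\<bar> \<le> sqrt (var_real M X)"
proof (cases "var_ext M X = 0")
  case True
  then show ?thesis unfolding sd_times_cor_def pearson_cor_def var_real_def by simp
next
  case False
  then have pX: "0 < var_real M X" using var_real_pos_iff[OF fX] by simp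
  have "\<bar>sd_times_cor M X W\<bar> = \<bar>covar M X W\<bar> / sqrt (var_real M W)"
    using pW by (simp add: sd_times_cor_eq_covar_div abs_divide)
  also have "\<dots> \<le> sqrt (var_real M X) * sqrt (var_real M W) / sqrt (var_real M W)"
    by (intro divide_right_mono abs_covar_le_sqrt_var[OF _ _ fX fW pX pW]) auto
  also have "\<dots> = sqrt (var_real M X)" using pW by simp
  finally show ?thesis .
qed

lemma (in prob_space) var_ext_eq_moments:
  fixes X :: "'a \<Rightarrow> real"
  assumes [measurable]: "X \<in> borel_measurable M"
    and X: "integrable M X" and X2: "integrable M (\<lambda>x. (X x)\<^sup>2)"
  shows "var_ext M X = ennreal (expectation (\<lambda>x. (X x)\<^sup>2) - (expectation X)\<^sup>2)"
    and "var_real M X = expectation (\<lambda>x. (X x)\<^sup>2) - (expectation X)\<^sup>2"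
proof -
  have "integrable M (\<lambda>x. (X x - expectation X)\<^sup>2)"
    using X X2 by (simp add: power2_diff)
  then have "var_ext M X = ennreal (variance X)"
    unfolding var_ext_def by (rule nn_integral_eq_integral) simp
  then show "var_ext M X = ennreal (expectation (\<lambda>x. (X x)\<^sup>2) - (expectation X)\<^sup>2)"
    by (simp add: variance_eq[OF X X2])
  then show "var_real M X = expectation (\<lambda>x. (X x)\<^sup>2) - (expectation X)\<^sup>2"
    using variance_positive[of X] unfolding var_real_def variance_eq[OF X X2] by simp
qed

lemma (in prob_space) covar_eq_moments:
  fixes X W :: "'a \<Rightarrow> real"
  assumes "integrable M X" "integrable M W" "integrable M (\<lambda>x. X x * W x)"
  shows "covar M X W = expectation (\<lambda>x. X x * W x) - expectation X * expectation W"
  unfolding covar_def using assms by (simp add: algebra_simps prob_space)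

section \<open>The Gaussian density and its moments\<close>

definition gauss_density :: "real^'n::finite \<Rightarrow> real \<Rightarrow> real^'n \<Rightarrow> real" where
  "gauss_density \<theta> v y = (\<Prod>i\<in>UNIV. normal_density (\<theta>$i) (sqrt v) (y$i))"

lemma vec_nth_measurable [measurable]: "(\<lambda>x::real^'n::finite. x $ i) \<in> borel_measurable borel"
  by (intro borel_measurable_continuous_onI continuous_intros)

lemma gauss_density_measurable [measurable]: "gauss_density \<theta> v \<in> borel_measurable borel"
  unfolding gauss_density_def by measurable

lemma gauss_density_nonneg: "0 \<le> gauss_density \<theta> v y"
  unfolding gauss_density_def by (simp add: prod_nonneg)

lemma gauss_eq_density: "gauss \<theta> v = density lborel (\<lambda>y. ennreal (gauss_density \<theta> v y))"
  unfolding gauss_def gauss_density_def ..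

lemma measurable_gauss [measurable_dest]:
  "f \<in> borel_measurable borel \<Longrightarrow> f \<in> borel_measurable (gauss \<theta> v)"
  unfolding gauss_def by simp

lemma integral_gauss:
  fixes h :: "real^'n::finite \<Rightarrow> real"
  assumes [measurable]: "h \<in> borel_measurable borel"
  shows "integral\<^sup>L (gauss \<theta> v) h = (\<integral>y. gauss_density \<theta> v y * h y \<partial>lborel)"
  unfolding gauss_eq_density by (subst integral_density) (auto simp: gauss_density_nonneg)

lemma integrable_gauss_iff:
  fixes h :: "real^'n::finite \<Rightarrow> real"
  assumes [measurable]: "h \<in> borel_measurable borel"
  shows "integrable (gauss \<theta> v) h \<longleftrightarrow> integrable lborel (\<lambda>y. gauss_density \<theta> v y * h y)"
  unfolding gauss_eq_density by (subst integrable_density) (auto simp: gauss_density_nonneg)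

text \<open>The \<open>2k\<close>-th central moment of the normal distribution with variance \<open>v\<close>.\<close>
definition normal_even_moment :: "real \<Rightarrow> nat \<Rightarrow> real" where
  "normal_even_moment v k = fact (2 * k) / ((2 / v)^k * fact k)"

lemma normal_even_moment_nonneg: "0 < v \<Longrightarrow> 0 \<le> normal_even_moment v k"
  unfolding normal_even_moment_def by simp

lemma normal_even_moment_simps [simp]:
  "normal_even_moment v 0 = 1"
  "0 < v \<Longrightarrow> normal_even_moment v (Suc 0) = v"
  "0 < v \<Longrightarrow> normal_even_moment v (Suc (Suc 0)) = 3 * v\<^sup>2"
  unfolding normal_even_moment_def by (simp_all add: field_simps power2_eq_square fact_numeral)

lemma has_bochner_integral_gauss_density_monomial:
  fixes \<theta> :: "real^'n::finite" and e :: "'n \<Rightarrow> nat"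
  assumes v: "0 < v"
  shows "has_bochner_integral lborel
           (\<lambda>y. gauss_density \<theta> v y * (\<Prod>i\<in>UNIV. (y$i - \<theta>$i)^(2 * e i)))
           (\<Prod>i\<in>UNIV. normal_even_moment v (e i))"
proof (rule has_bochner_integral_nn_integral)
  define h where "h i x = normal_density (\<theta>$i) (sqrt v) x * (x - \<theta>$i)^(2 * e i)" for i x
  have h_integral: "(\<integral>\<^sup>+x. ennreal (h i x) \<partial>lborel) = ennreal (normal_even_moment v (e i))" for i
  proof -
    have sv: "0 < sqrt v" using v by simp
    have "(\<integral>\<^sup>+x. ennreal (h i x) \<partial>lborel) = ennreal (\<integral>x. h i x \<partial>lborel)"
      unfolding h_def
      by (rule nn_integral_eq_integral)
        (auto intro: integrable_normal_moment[OF sv] simp: power_mult[symmetric])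
    also have "(\<integral>x. h i x \<partial>lborel) = normal_even_moment v (e i)"
      unfolding h_def normal_even_moment_def
      using integral_normal_moment_even[OF sv, where k="e i" and \<mu>="\<theta>$i"] v by simp
    finally show ?thesis .
  qed
  have "gauss_density \<theta> v y * (\<Prod>i\<in>UNIV. (y$i - \<theta>$i)^(2 * e i)) = (\<Prod>i\<in>UNIV. h i (y$i))" for y
    unfolding gauss_density_def h_def by (simp add: prod.distrib)
  moreover have "(\<integral>\<^sup>+y. ennreal (\<Prod>i\<in>UNIV. h i (y$i)) \<partial>(lborel::(real^'n) measure))
         = (\<Prod>i\<in>UNIV. \<integral>\<^sup>+x. ennreal (h i x) \<partial>lborel)"
    by (rule nn_integral_lborel_vec_prod) (auto simp: h_def power_mult)
  ultimately show "(\<integral>\<^sup>+y. ennreal (gauss_density \<theta> v y * (\<Prod>i\<in>UNIV. (y$i - \<theta>$i)^(2 * e i))) \<partial>lborel)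
       = ennreal (\<Prod>i\<in>UNIV. normal_even_moment v (e i))"
    using v by (simp add: h_integral prod_ennreal normal_even_moment_nonneg)
qed (use v in \<open>auto intro!: mult_nonneg_nonneg gauss_density_nonneg prod_nonneg
                   normal_even_moment_nonneg simp: power_mult\<close>)

lemma has_bochner_integral_gauss_density:
  "0 < v \<Longrightarrow> has_bochner_integral lborel (gauss_density (\<theta>::real^'n::finite) v) 1"
  using has_bochner_integral_gauss_density_monomial[of v \<theta> "\<lambda>_. 0"] by simp

lemma has_bochner_integral_gauss_density_sq_dist:
  fixes \<theta> :: "real^'n::finite"
  assumes v: "0 < v"
  shows "has_bochner_integral lborel (\<lambda>y. gauss_density \<theta> v y * (norm (y - \<theta>))\<^sup>2)
           (real CARD('n) * v)"
proof -
  define e where "e j i = (if i = j then 1 else 0 :: nat)" for j i :: 'n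
  have "has_bochner_integral lborel
     (\<lambda>y. \<Sum>j\<in>UNIV. gauss_density \<theta> v y * (\<Prod>i\<in>UNIV. (y$i - \<theta>$i)^(2 * e j i)))
     (\<Sum>j\<in>(UNIV::'n set). \<Prod>i\<in>UNIV. normal_even_moment v (e j i))"
    by (intro has_bochner_integral_sum has_bochner_integral_gauss_density_monomial[OF v])
  moreover have "(\<Prod>i\<in>UNIV. (y$i - \<theta>$i)^(2 * e j i)) = (y$j - \<theta>$j)\<^sup>2" for y j
    unfolding e_def power_mult by (rule prod_indicator_power)
  moreover have "(\<Prod>i\<in>UNIV. normal_even_moment v (e j i)) = v" for j
    using prod_indicator_power[of "\<lambda>_. v" j] v
    by (simp add: e_def if_distrib cong: if_cong)
  ultimately show ?thesis
    by (simp add: norm_vec_power2 sum_distrib_left)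
qed

lemma has_bochner_integral_gauss_density_sq_dist_sq:
  fixes \<theta> :: "real^'n::finite"
  assumes v: "0 < v"
  shows "has_bochner_integral lborel (\<lambda>y. gauss_density \<theta> v y * ((norm (y - \<theta>))\<^sup>2)\<^sup>2)
           (real CARD('n) * (real CARD('n) + 2) * v\<^sup>2)"
proof -
  define e where "e j k i = (if i = j then 1 else 0) + (if i = k then 1 else 0 :: nat)" for j k i :: 'n
  have "has_bochner_integral lborel
     (\<lambda>y. \<Sum>j\<in>UNIV. \<Sum>k\<in>UNIV. gauss_density \<theta> v y * (\<Prod>i\<in>UNIV. (y$i - \<theta>$i)^(2 * e j k i)))
     (\<Sum>j\<in>(UNIV::'n set). \<Sum>k\<in>UNIV. \<Prod>i\<in>UNIV. normal_even_moment v (e j k i))"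
    by (intro has_bochner_integral_sum has_bochner_integral_gauss_density_monomial[OF v])
  moreover have "(\<Prod>i\<in>UNIV. (y$i - \<theta>$i)^(2 * e j k i)) = (y$j - \<theta>$j)\<^sup>2 * (y$k - \<theta>$k)\<^sup>2" for y j k
    unfolding e_def distrib_left power_add prod.distrib power_mult
    by (simp add: prod_indicator_power)
  moreover have "(\<Prod>i\<in>UNIV. normal_even_moment v (e j k i)) = (if j = k then 3 * v\<^sup>2 else v\<^sup>2)" for j k
  proof (cases "j = k")
    case True
    then show ?thesis
      using prod_indicator_power[of "\<lambda>_. 3 * v\<^sup>2" j] v
      by (simp add: e_def if_distrib cong: if_cong)
  next
    case False
    have "(\<Prod>i\<in>UNIV. normal_even_moment v (e j k i))
        = (\<Prod>i\<in>UNIV. v ^ (if i = j then 1 else 0)) * (\<Prod>i\<in>UNIV. v ^ (if i = k then 1 else 0))"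
      unfolding prod.distrib[symmetric] by (rule prod.cong) (use False v in \<open>auto simp: e_def\<close>)
    then show ?thesis
      using False by (simp only: prod_indicator_power) (simp add: power2_eq_square)
  qed
  moreover have "(\<Sum>j\<in>(UNIV::'n set). \<Sum>k\<in>UNIV. if j = k then 3 * v\<^sup>2 else v\<^sup>2)
      = real CARD('n) * (real CARD('n) + 2) * v\<^sup>2"
  proof -
    have "(\<Sum>k\<in>(UNIV::'n set). if j = k then 3 * v\<^sup>2 else v\<^sup>2)
        = (\<Sum>k\<in>(UNIV::'n set). v\<^sup>2 + (if j = k then 2 * v\<^sup>2 else 0))" for j
      by (rule sum.cong) auto
    then show ?thesis by (simp add: sum.distrib algebra_simps)
  qed
  moreover have "((norm (y - \<theta>))\<^sup>2)\<^sup>2 = (\<Sum>j\<in>UNIV. \<Sum>k\<in>UNIV. (y$j - \<theta>$j)\<^sup>2 * (y$k - \<theta>$k)\<^sup>2)" for y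
    by (simp add: norm_vec_power2 power2_eq_square[of "sum _ _"] sum_product)
  ultimately show ?thesis
    by (simp add: sum_distrib_left)
qed

lemma prob_space_gauss: "0 < v \<Longrightarrow> prob_space (gauss (\<theta>::real^'n::finite) v)"
proof (rule prob_spaceI)
  assume v: "0 < v"
  have "emeasure (gauss \<theta> v) (space (gauss \<theta> v)) = (\<integral>\<^sup>+y. ennreal (gauss_density \<theta> v y) \<partial>lborel)"
    unfolding gauss_eq_density by (simp add: emeasure_density)
  also have "\<dots> = 1"
    using has_bochner_integral_gauss_density[OF v, of \<theta>]
    by (subst nn_integral_eq_integral) (auto simp: has_bochner_integral_iff gauss_density_nonneg)
  finally show "emeasure (gauss \<theta> v) (space (gauss \<theta> v)) = 1" .
qed

lemma
  fixes \<theta> :: "real^'n::finite"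
  assumes v: "0 < v"
  shows integrable_gauss_sq_dist: "integrable (gauss \<theta> v) (\<lambda>y. (norm (y - \<theta>))\<^sup>2)"
    and integral_gauss_sq_dist: "(\<integral>y. (norm (y - \<theta>))\<^sup>2 \<partial>gauss \<theta> v) = real CARD('n) * v"
    and var_ext_gauss_sq_dist:
      "var_ext (gauss \<theta> v) (\<lambda>y. (norm (y - \<theta>))\<^sup>2) = ennreal (2 * real CARD('n) * v\<^sup>2)"
    and var_real_gauss_sq_dist:
      "var_real (gauss \<theta> v) (\<lambda>y. (norm (y - \<theta>))\<^sup>2) = 2 * real CARD('n) * v\<^sup>2"
proof -
  interpret prob_space "gauss \<theta> v" by (rule prob_space_gauss[OF v])
  note m1 = has_bochner_integral_gauss_density_sq_dist[OF v, of \<theta>]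
  note m2 = has_bochner_integral_gauss_density_sq_dist_sq[OF v, of \<theta>]
  show i1: "integrable (gauss \<theta> v) (\<lambda>y. (norm (y - \<theta>))\<^sup>2)"
    using m1 by (simp add: integrable_gauss_iff has_bochner_integral_iff)
  have i2: "integrable (gauss \<theta> v) (\<lambda>y. ((norm (y - \<theta>))\<^sup>2)\<^sup>2)"
    using m2 by (simp add: integrable_gauss_iff has_bochner_integral_iff)
  show e1: "(\<integral>y. (norm (y - \<theta>))\<^sup>2 \<partial>gauss \<theta> v) = real CARD('n) * v"
    using m1 by (simp add: integral_gauss has_bochner_integral_iff)
  have e2: "(\<integral>y. ((norm (y - \<theta>))\<^sup>2)\<^sup>2 \<partial>gauss \<theta> v) = real CARD('n) * (real CARD('n) + 2) * v\<^sup>2"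
    using m2 by (simp add: integral_gauss has_bochner_integral_iff)
  have "real CARD('n) * (real CARD('n) + 2) * v\<^sup>2 - (real CARD('n) * v)\<^sup>2 = 2 * real CARD('n) * v\<^sup>2"
    by (simp add: algebra_simps power2_eq_square)
  then show "var_ext (gauss \<theta> v) (\<lambda>y. (norm (y - \<theta>))\<^sup>2) = ennreal (2 * real CARD('n) * v\<^sup>2)"
    and "var_real (gauss \<theta> v) (\<lambda>y. (norm (y - \<theta>))\<^sup>2) = 2 * real CARD('n) * v\<^sup>2"
    using var_ext_eq_moments[OF _ i1 i2] unfolding e1 e2 by (simp_all add: measurable_gauss)
qed

lemma integrable_gauss_norm_diff_power:
  fixes \<theta> :: "real^'n::finite" and g :: "real^'n \<Rightarrow> real^'n"
  assumes v: "0 < v" and [measurable]: "g \<in> borel_measurable borel"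
    and "integrable (gauss \<theta> v) (\<lambda>y. norm (g y) ^ k)"
    and "integrable (gauss \<theta> v) (\<lambda>y. norm (g y) ^ k * (norm (y - \<theta>))\<^sup>2)"
  shows "integrable (gauss \<theta> v) (\<lambda>y. norm (\<theta> - g y) ^ k)"
    and "integrable (gauss \<theta> v) (\<lambda>y. norm (\<theta> - g y) ^ k * (norm (y - \<theta>))\<^sup>2)"
proof -
  interpret prob_space "gauss \<theta> v" by (rule prob_space_gauss[OF v])
  have gm: "g \<in> borel_measurable (gauss \<theta> v)"
    and Wm: "(\<lambda>y. (norm (y - \<theta>))\<^sup>2) \<in> borel_measurable (gauss \<theta> v)"
    by (rule measurable_gauss, measurable)+
  show "integrable (gauss \<theta> v) (\<lambda>y. norm (\<theta> - g y) ^ k)"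
    using integrable_norm_diff_power_mult[OF gm, of "\<lambda>_. 1" k \<theta>] assms(3) by simp
  show "integrable (gauss \<theta> v) (\<lambda>y. norm (\<theta> - g y) ^ k * (norm (y - \<theta>))\<^sup>2)"
    using integrable_norm_diff_power_mult[OF gm Wm _ integrable_gauss_sq_dist[OF v] assms(4)] by simp
qed

section \<open>Differentiation in the variance parameter\<close>

lemma gauss_density_eq:
  fixes \<theta> :: "real^'n::finite"
  assumes v: "0 < v"
  shows "gauss_density \<theta> v y
           = (2 * pi * v) powr (- (real CARD('n) / 2)) * exp (- (norm (y - \<theta>))\<^sup>2 / (2 * v))"
proof -
  have pv: "0 < 2 * pi * v" using v by simp
  have "normal_density (\<theta>$i) (sqrt v) (y$i) = (2 * pi * v) powr (-1/2) * exp (- (y$i - \<theta>$i)\<^sup>2 / (2 * v))" for i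
    unfolding normal_density_def using v pv by (simp add: powr_minus_divide powr_half_sqrt)
  then have "gauss_density \<theta> v y
      = (\<Prod>i\<in>(UNIV::'n set). (2 * pi * v) powr (-1/2)) * exp (\<Sum>i\<in>UNIV. - (y$i - \<theta>$i)\<^sup>2 / (2 * v))"
    unfolding gauss_density_def by (simp add: prod.distrib exp_sum)
  also have "(\<Prod>i\<in>(UNIV::'n set). (2 * pi * v) powr (-1/2)) = ((2 * pi * v) powr (-1/2)) ^ CARD('n)"
    by simp
  also have "\<dots> = (2 * pi * v) powr (real CARD('n) * (-1/2))"
    using pv by (subst powr_power) auto
  also have "real CARD('n) * (-1/2) = - (real CARD('n) / 2)"
    by simp
  also have "(\<Sum>i\<in>UNIV. - (y$i - \<theta>$i)\<^sup>2 / (2 * v)) = - (norm (y - \<theta>))\<^sup>2 / (2 * v)"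
    by (simp add: norm_vec_power2 sum_divide_distrib[symmetric] sum_negf)
  finally show ?thesis .
qed

text \<open>The derivative of \<open>t \<mapsto> gauss_density \<theta> ((1 + t) * s) y\<close>.\<close>
definition gauss_density_deriv :: "real^'n::finite \<Rightarrow> real \<Rightarrow> real \<Rightarrow> real^'n \<Rightarrow> real" where
  "gauss_density_deriv \<theta> s t y = gauss_density \<theta> ((1 + t) * s) y *
     ((norm (y - \<theta>))\<^sup>2 / (2 * s * (1 + t)\<^sup>2) - real CARD('n) / (2 * (1 + t)))"

lemma gauss_density_deriv_measurable_pair:
  "(\<lambda>(t, y). gauss_density_deriv (\<theta>::real^'n::finite) s t y) \<in> borel_measurable (borel \<Otimes>\<^sub>M borel)"
  unfolding gauss_density_deriv_def gauss_density_def normal_density_def by measurable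

lemma gauss_density_deriv_measurable [measurable]:
  "gauss_density_deriv (\<theta>::real^'n::finite) s t \<in> borel_measurable borel"
  unfolding gauss_density_deriv_def by measurable

lemma has_real_derivative_gauss_density:
  fixes \<theta> :: "real^'n::finite"
  assumes s: "0 < s" and t: "-1 < t"
  shows "((\<lambda>t. gauss_density \<theta> ((1 + t) * s) y) has_real_derivative gauss_density_deriv \<theta> s t y) (at t)"
proof -
  define a where "a = real CARD('n) / 2"
  define R where "R = (norm (y - \<theta>))\<^sup>2"
  define C where "C = (2 * pi * s) powr (-a)"
  define F where "F t = C * (1 + t) powr (-a) * exp (- R / (2 * s * (1 + t)))" for t
  have t1: "0 < 1 + t" using t by simp
  have F_eq: "F u = gauss_density \<theta> ((1 + u) * s) y" if "-1 < u" for u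
    using that s unfolding F_def C_def a_def R_def
    by (subst gauss_density_eq) (auto simp: powr_mult[symmetric] mult_ac)
  have D: "(F has_real_derivative
          C * ((-a) * (1 + t) powr (-a - 1) * 1) * exp (- R / (2 * s * (1 + t)))
          + C * (1 + t) powr (-a) * (exp (- R / (2 * s * (1 + t))) * (R * (2 * s * 1) / (2 * s * (1 + t))\<^sup>2))) (at t)"
    unfolding F_def using t1 s mult_pos_pos[OF s t1]
    by (auto intro!: derivative_eq_intros simp: field_simps power2_eq_square)
  have e1: "R * (2 * s * 1) / (2 * s * (1 + t))\<^sup>2 = R / (2 * s * (1 + t)\<^sup>2)"
    using s by (simp add: power_mult_distrib power2_eq_square)
  have e2: "(1 + t) powr (-a - 1) = (1 + t) powr (-a) / (1 + t)"
    using t1 by (simp add: powr_diff)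
  have "(F has_real_derivative F t * (R / (2 * s * (1 + t)\<^sup>2) - a / (1 + t))) (at t)"
    by (rule DERIV_cong[OF D]) (unfold e1 e2, simp add: F_def algebra_simps diff_divide_distrib)
  then have "(F has_real_derivative gauss_density_deriv \<theta> s t y) (at t)"
    unfolding gauss_density_deriv_def F_eq[OF t] R_def a_def by (simp add: mult_ac)
  then show ?thesis
    by (rule has_field_derivative_transform_within_open[OF _ open_greaterThan[of "-1"]])
      (use t F_eq in auto)
qed

lemma gauss_density_le_larger_var:
  fixes \<theta> :: "real^'n::finite"
  assumes s: "0 < s" and t: "0 \<le> t" "t \<le> b"
  shows "gauss_density \<theta> ((1 + t) * s) y
           \<le> (1 + b) powr (real CARD('n) / 2) * gauss_density \<theta> ((1 + b) * s) y"
proof -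
  define a where "a = real CARD('n) / 2"
  define R where "R = (norm (y - \<theta>))\<^sup>2"
  have a: "0 \<le> a" and R: "0 \<le> R" and b: "0 < 1 + b" "0 < 1 + t"
    using t unfolding a_def R_def by auto
  have "(2 * pi * ((1 + t) * s)) powr (-a) \<le> (2 * pi * s) powr (-a)"
    by (rule powr_mono2') (use a s t in auto)
  also have "(2 * pi * s) powr (-a) = (1 + b) powr a * (2 * pi * ((1 + b) * s)) powr (-a)"
  proof -
    have "(2 * pi * ((1 + b) * s)) powr (-a) = (1 + b) powr (-a) * (2 * pi * s) powr (-a)"
      using b s by (simp add: powr_mult[symmetric] mult_ac)
    moreover have "(1 + b) powr a * (1 + b) powr (-a) = 1"
      using b by (simp add: powr_add[symmetric])
    ultimately show ?thesis by (simp add: mult.assoc[symmetric])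
  qed
  finally have "(2 * pi * ((1 + t) * s)) powr (-a) \<le> (1 + b) powr a * (2 * pi * ((1 + b) * s)) powr (-a)" .
  moreover have "exp (- R / (2 * ((1 + t) * s))) \<le> exp (- R / (2 * ((1 + b) * s)))"
    using R s t b by (auto intro!: divide_left_mono mult_right_mono mult_pos_pos)
  ultimately show ?thesis
    using s b unfolding a_def R_def
    by (simp add: gauss_density_eq mult.assoc[symmetric] mult_mono)
qed

lemma abs_gauss_density_deriv_le:
  fixes \<theta> :: "real^'n::finite"
  assumes s: "0 < s" and t: "0 \<le> t" "t \<le> b"
  shows "\<bar>gauss_density_deriv \<theta> s t y\<bar> \<le> (1 + b) powr (real CARD('n) / 2) *
           gauss_density \<theta> ((1 + b) * s) y * ((norm (y - \<theta>))\<^sup>2 / (2 * s) + real CARD('n) / 2)"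
proof -
  define R where "R = (norm (y - \<theta>))\<^sup>2"
  have R: "0 \<le> R" and t1: "1 \<le> 1 + t" and t2: "1 \<le> (1 + t)\<^sup>2"
    using t unfolding R_def by auto
  have "\<bar>R / (2 * s * (1 + t)\<^sup>2) - real CARD('n) / (2 * (1 + t))\<bar>
      \<le> R / (2 * s * (1 + t)\<^sup>2) + real CARD('n) / (2 * (1 + t))"
    using R s t by (intro abs_triangle_ineq4[THEN order_trans]) auto
  also have "\<dots> \<le> R / (2 * s) + real CARD('n) / 2"
    using R s t1 t2 by (intro add_mono divide_left_mono) (auto intro!: mult_pos_pos)
  finally have "\<bar>R / (2 * s * (1 + t)\<^sup>2) - real CARD('n) / (2 * (1 + t))\<bar> \<le> R / (2 * s) + real CARD('n) / 2" .
  then show ?thesis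
    unfolding gauss_density_deriv_def abs_mult R_def[symmetric]
    using gauss_density_le_larger_var[OF s t, of \<theta> y]
    by (intro mult_mono) (auto simp: gauss_density_nonneg)
qed

lemma integrable_gauss_density_mult_smaller_var:
  fixes \<theta> :: "real^'n::finite" and \<phi> :: "real^'n \<Rightarrow> real"
  assumes s: "0 < s" and t: "0 \<le> t" "t \<le> b" and [measurable]: "\<phi> \<in> borel_measurable borel"
    and "integrable lborel (\<lambda>y. gauss_density \<theta> ((1 + b) * s) y * \<phi> y)"
  shows "integrable lborel (\<lambda>y. gauss_density \<theta> ((1 + t) * s) y * \<phi> y)"
proof (rule Bochner_Integration.integrable_bound)
  show "integrable lborel (\<lambda>y. (1 + b) powr (real CARD('n) / 2) * \<bar>gauss_density \<theta> ((1 + b) * s) y * \<phi> y\<bar>)"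
    using assms(5) by (intro integrable_mult_right integrable_abs)
  show "AE y in lborel. norm (gauss_density \<theta> ((1 + t) * s) y * \<phi> y)
          \<le> norm ((1 + b) powr (real CARD('n) / 2) * \<bar>gauss_density \<theta> ((1 + b) * s) y * \<phi> y\<bar>)"
    using gauss_density_le_larger_var[OF s t, of \<theta>]
    by (intro AE_I2) (auto simp: abs_mult gauss_density_nonneg mult.assoc[symmetric] intro!: mult_right_mono)
qed measurable

lemma integrable_gauss_smaller_var:
  fixes \<theta> :: "real^'n::finite" and X :: "real^'n \<Rightarrow> real"
  assumes "0 < s" "0 \<le> t" "t \<le> b" "X \<in> borel_measurable borel"
    and "integrable (gauss \<theta> ((1 + b) * s)) X"
  shows "integrable (gauss \<theta> ((1 + t) * s)) X"
  using assms integrable_gauss_density_mult_smaller_var[OF assms(1-4)]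
  by (simp add: integrable_gauss_iff)

definition gauss_density_deriv_majorant ::
    "real^'n::finite \<Rightarrow> real \<Rightarrow> real \<Rightarrow> (real^'n \<Rightarrow> real) \<Rightarrow> real^'n \<Rightarrow> real" where
  "gauss_density_deriv_majorant \<theta> s b \<phi> y = (1 + b) powr (real CARD('n) / 2) *
     (\<bar>gauss_density \<theta> ((1 + b) * s) y * \<phi> y\<bar> * ((norm (y - \<theta>))\<^sup>2 / (2 * s) + real CARD('n) / 2))"

lemma gauss_density_deriv_majorant_nonneg: "0 < s \<Longrightarrow> 0 \<le> gauss_density_deriv_majorant \<theta> s b \<phi> y"
  unfolding gauss_density_deriv_majorant_def by simp

lemma abs_mult_gauss_density_deriv_le:
  fixes \<theta> :: "real^'n::finite"
  assumes "0 < s" "0 \<le> t" "t \<le> b"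
  shows "\<bar>\<phi> y * gauss_density_deriv \<theta> s t y\<bar> \<le> gauss_density_deriv_majorant \<theta> s b \<phi> y"
  using mult_left_mono[OF abs_gauss_density_deriv_le[OF assms] abs_ge_zero[of "\<phi> y"], of \<theta> y]
  unfolding gauss_density_deriv_majorant_def by (simp add: abs_mult gauss_density_nonneg mult_ac)

lemma integrable_gauss_density_deriv_majorant:
  fixes \<theta> :: "real^'n::finite" and \<phi> :: "real^'n \<Rightarrow> real"
  assumes s: "0 < s" and [measurable]: "\<phi> \<in> borel_measurable borel"
    and i1: "integrable lborel (\<lambda>y. gauss_density \<theta> ((1 + b) * s) y * \<phi> y)"
    and i2: "integrable lborel (\<lambda>y. gauss_density \<theta> ((1 + b) * s) y * \<phi> y * (norm (y - \<theta>))\<^sup>2)"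
  shows "integrable lborel (gauss_density_deriv_majorant \<theta> s b \<phi>)"
proof -
  have "gauss_density_deriv_majorant \<theta> s b \<phi> = (\<lambda>y. (1 + b) powr (real CARD('n) / 2) *
          ((1 / (2 * s)) * \<bar>gauss_density \<theta> ((1 + b) * s) y * \<phi> y * (norm (y - \<theta>))\<^sup>2\<bar>
            + (real CARD('n) / 2) * \<bar>gauss_density \<theta> ((1 + b) * s) y * \<phi> y\<bar>))"
    unfolding gauss_density_deriv_majorant_def using s by (simp add: abs_mult field_simps)
  then show ?thesis
    using i1 i2 by (simp only:) (intro integrable_mult_right Bochner_Integration.integrable_add integrable_abs)
qed

lemma interval_integral_gauss_density_deriv:
  fixes \<theta> :: "real^'n::finite"
  assumes s: "0 < s" and a: "0 \<le> \<alpha>"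
  shows "(LBINT t=(0::real)..\<alpha>. gauss_density_deriv \<theta> s t y)
           = gauss_density \<theta> ((1 + \<alpha>) * s) y - gauss_density \<theta> ((1 + 0) * s) y"
proof -
  define F where "F t = gauss_density \<theta> ((1 + t) * s) y" for t
  have "(LBINT t=(0::real)..\<alpha>. gauss_density_deriv \<theta> s t y) = F \<alpha> - F 0"
  proof (rule interval_integral_FTC_finite)
    have "isCont (\<lambda>t. gauss_density_deriv \<theta> s t y) t" if "0 \<le> t" for t
    proof -
      have "isCont F t"
        unfolding F_def by (rule DERIV_isCont[OF has_real_derivative_gauss_density[OF s]]) (use that in simp)
      then show ?thesis
        unfolding gauss_density_deriv_def F_def[symmetric] using s that by (intro continuous_intros) auto
    qed
    then show "continuous_on {min 0 \<alpha>..max 0 \<alpha>} (\<lambda>t. gauss_density_deriv \<theta> s t y)"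
      using a by (intro continuous_at_imp_continuous_on ballI) auto
    fix t assume "min 0 \<alpha> \<le> t" "t \<le> max 0 \<alpha>"
    then have "-1 < t" using a by simp
    from has_real_derivative_gauss_density[OF s this, of \<theta> y]
    show "(F has_vector_derivative gauss_density_deriv \<theta> s t y) (at t within {min 0 \<alpha>..max 0 \<alpha>})"
      unfolding F_def
      by (simp add: has_real_derivative_iff_has_vector_derivative has_vector_derivative_at_within)
  qed
  then show ?thesis unfolding F_def .
qed

lemma
  fixes \<theta> :: "real^'n::finite" and \<phi> :: "real^'n \<Rightarrow> real"
  assumes s: "0 < s" and a: "0 \<le> \<alpha>" "\<alpha> \<le> b" and [measurable]: "\<phi> \<in> borel_measurable borel"
    and i1: "integrable lborel (\<lambda>y. gauss_density \<theta> ((1 + b) * s) y * \<phi> y)"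
    and i2: "integrable lborel (\<lambda>y. gauss_density \<theta> ((1 + b) * s) y * \<phi> y * (norm (y - \<theta>))\<^sup>2)"
  shows set_integrable_gauss_density_deriv:
      "set_integrable lborel {0..\<alpha>} (\<lambda>t. \<integral>y. \<phi> y * gauss_density_deriv \<theta> s t y \<partial>lborel)"
    and integral_gauss_density_diff_eq:
      "(\<integral>y. gauss_density \<theta> ((1 + \<alpha>) * s) y * \<phi> y \<partial>lborel)
         - (\<integral>y. gauss_density \<theta> ((1 + 0) * s) y * \<phi> y \<partial>lborel)
       = (LINT t:{0..\<alpha>}|lborel. \<integral>y. \<phi> y * gauss_density_deriv \<theta> s t y \<partial>lborel)"
proof -
  define B where "B = gauss_density_deriv_majorant \<theta> s b \<phi>"
  have B_int: "integrable lborel B"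
    unfolding B_def by (rule integrable_gauss_density_deriv_majorant[OF s _ i1 i2]) simp
  have B_nonneg: "0 \<le> B y" for y
    unfolding B_def using s by (rule gauss_density_deriv_majorant_nonneg)
  have B_bound: "\<bar>\<phi> y * gauss_density_deriv \<theta> s t y\<bar> \<le> B y" if "0 \<le> t" "t \<le> b" for t y
    unfolding B_def using s that by (rule abs_mult_gauss_density_deriv_le)
  define G where "G t y = indicator {0..\<alpha>} t * (\<phi> y * gauss_density_deriv \<theta> s t y)" for t y
  have G_measurable: "(\<lambda>(t, y). G t y) \<in> borel_measurable (lborel \<Otimes>\<^sub>M lborel)"
    unfolding G_def
    by (rule lborel_pair_measurable)
      (use gauss_density_deriv_measurable_pair[of \<theta> s] in measurable)
  have G_int: "integrable (lborel \<Otimes>\<^sub>M lborel) (\<lambda>(t, y). G t y)"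
  proof (rule Bochner_Integration.integrable_bound[OF _ G_measurable])
    have "integrable lborel (\<lambda>t. indicator {0..\<alpha>} t * c)" for c :: real
      using borel_integrable_atLeastAtMost'[OF continuous_on_const, of 0 \<alpha> c]
      by (simp add: set_integrable_def)
    moreover have "B \<in> borel_measurable borel"
      unfolding B_def gauss_density_deriv_majorant_def by measurable
    ultimately show "integrable (lborel \<Otimes>\<^sub>M lborel) (\<lambda>(t, y). indicator {0..\<alpha>} t * B y)"
      using B_int B_nonneg
      by (intro lborel_pair.Fubini_integrable lborel_pair_measurable) (auto simp: abs_mult)
    show "AE z in lborel \<Otimes>\<^sub>M lborel. norm (case z of (t, y) \<Rightarrow> G t y)
            \<le> norm (case z of (t, y) \<Rightarrow> indicator {0..\<alpha>} t * B y)"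
      using B_bound a by (intro AE_I2) (auto simp: G_def indicator_def abs_mult B_nonneg split: prod.split)
  qed
  have inner_t: "(\<integral>y. G t y \<partial>lborel) = indicator {0..\<alpha>} t *\<^sub>R (\<integral>y. \<phi> y * gauss_density_deriv \<theta> s t y \<partial>lborel)" for t
    unfolding G_def by simp
  show "set_integrable lborel {0..\<alpha>} (\<lambda>t. \<integral>y. \<phi> y * gauss_density_deriv \<theta> s t y \<partial>lborel)"
    using lborel_pair.integrable_fst[OF G_int] unfolding set_integrable_def inner_t by simp
  have inner_y: "(\<integral>t. G t y \<partial>lborel)
      = gauss_density \<theta> ((1 + \<alpha>) * s) y * \<phi> y - gauss_density \<theta> ((1 + 0) * s) y * \<phi> y" for y
  proof -
    have "(\<integral>t. G t y \<partial>lborel) = \<phi> y * (\<integral>t. indicator {0..\<alpha>} t *\<^sub>R gauss_density_deriv \<theta> s t y \<partial>lborel)"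
      unfolding G_def by (simp add: mult_ac)
    also have "\<dots> = \<phi> y * (LBINT t=(0::real)..\<alpha>. gauss_density_deriv \<theta> s t y)"
      using interval_integral_Icc[OF a(1), of "\<lambda>t. gauss_density_deriv \<theta> s t y"]
      by (simp add: set_lebesgue_integral_def)
    finally show ?thesis
      by (simp add: interval_integral_gauss_density_deriv[OF s a(1)] algebra_simps)
  qed
  have "integrable lborel (\<lambda>y. gauss_density \<theta> ((1 + t) * s) y * \<phi> y)" if "0 \<le> t" "t \<le> b" for t
    using integrable_gauss_density_mult_smaller_var[OF s that _ i1] by simp
  from this[of \<alpha>] this[of 0]
  have "(\<integral>y. gauss_density \<theta> ((1 + \<alpha>) * s) y * \<phi> y \<partial>lborel)
         - (\<integral>y. gauss_density \<theta> ((1 + 0) * s) y * \<phi> y \<partial>lborel)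
       = (\<integral>y. (\<integral>t. G t y \<partial>lborel) \<partial>lborel)"
    using a unfolding inner_y by (intro Bochner_Integration.integral_diff[symmetric]) auto
  also have "\<dots> = (\<integral>t. (\<integral>y. G t y \<partial>lborel) \<partial>lborel)"
    by (rule lborel_pair.Fubini_integral[OF G_int])
  finally show "(\<integral>y. gauss_density \<theta> ((1 + \<alpha>) * s) y * \<phi> y \<partial>lborel)
         - (\<integral>y. gauss_density \<theta> ((1 + 0) * s) y * \<phi> y \<partial>lborel)
       = (LINT t:{0..\<alpha>}|lborel. \<integral>y. \<phi> y * gauss_density_deriv \<theta> s t y \<partial>lborel)"
    unfolding inner_t set_lebesgue_integral_def .
qed

section \<open>The rate of change of Gaussian expectations\<close>

definition gauss_mean_slope :: "real^'n::finite \<Rightarrow> real \<Rightarrow> (real^'n \<Rightarrow> real) \<Rightarrow> real \<Rightarrow> real" where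
  "gauss_mean_slope \<theta> s X t = sqrt (real CARD('n)) / (sqrt 2 * (1 + t)) *
     sd_times_cor (gauss \<theta> ((1 + t) * s)) X (\<lambda>y. (norm (y - \<theta>))\<^sup>2)"

lemma gauss_mean_slope_eq_integral:
  fixes \<theta> :: "real^'n::finite" and X :: "real^'n \<Rightarrow> real"
  assumes [measurable]: "X \<in> borel_measurable borel" and s: "0 < s" and t: "0 \<le> t"
    and i1: "integrable (gauss \<theta> ((1 + t) * s)) X"
    and i2: "integrable (gauss \<theta> ((1 + t) * s)) (\<lambda>y. X y * (norm (y - \<theta>))\<^sup>2)"
  shows "gauss_mean_slope \<theta> s X t = (\<integral>y. X y * gauss_density_deriv \<theta> s t y \<partial>lborel)"
proof -
  define v where "v = (1 + t) * s"
  define n where "n = real CARD('n)"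
  define mX where "mX = (\<integral>y. X y \<partial>gauss \<theta> v)"
  define mXW where "mXW = (\<integral>y. X y * (norm (y - \<theta>))\<^sup>2 \<partial>gauss \<theta> v)"
  have v: "0 < v" and n: "0 < n" unfolding v_def n_def using s t by auto
  interpret prob_space "gauss \<theta> v" by (rule prob_space_gauss[OF v])
  have i1': "integrable (gauss \<theta> v) X" and i2': "integrable (gauss \<theta> v) (\<lambda>y. X y * (norm (y - \<theta>))\<^sup>2)"
    using i1 i2 by (simp_all add: v_def)
  have "covar (gauss \<theta> v) X (\<lambda>y. (norm (y - \<theta>))\<^sup>2) = mXW - mX * (n * v)"
    using covar_eq_moments[OF i1' integrable_gauss_sq_dist[OF v] i2'] integral_gauss_sq_dist[OF v, of \<theta>]
    unfolding mXW_def mX_def n_def by simp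
  then have slope: "gauss_mean_slope \<theta> s X t = sqrt n / (sqrt 2 * (1 + t)) * ((mXW - mX * (n * v)) / (sqrt 2 * sqrt n * v))"
    unfolding gauss_mean_slope_def v_def[symmetric] n_def[symmetric]
    using v by (simp add: sd_times_cor_eq_covar_div var_real_gauss_sq_dist n_def real_sqrt_mult)
  have "(\<lambda>y. X y * gauss_density_deriv \<theta> s t y)
      = (\<lambda>y. (1 / (2 * s * (1 + t)\<^sup>2)) * (gauss_density \<theta> v y * (X y * (norm (y - \<theta>))\<^sup>2))
           - (n / (2 * (1 + t))) * (gauss_density \<theta> v y * X y))"
    unfolding gauss_density_deriv_def v_def n_def by (simp add: algebra_simps)
  then have "(\<integral>y. X y * gauss_density_deriv \<theta> s t y \<partial>lborel)
      = (1 / (2 * s * (1 + t)\<^sup>2)) * mXW - (n / (2 * (1 + t))) * mX"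
    using i1 i2 unfolding mXW_def mX_def v_def by (simp add: integrable_gauss_iff integral_gauss)
  also have "\<dots> = (mXW - mX * (n * v)) / (2 * (1 + t) * v)"
  proof -
    have "(1 / (2 * s * u\<^sup>2)) * mXW - (n / (2 * u)) * mX = (mXW - mX * (n * (u * s))) / (2 * u * (u * s))"
      if "0 < u" for u
      using s that by (simp add: field_simps power2_eq_square)
    from this[of "1 + t"] show ?thesis using t unfolding v_def by simp
  qed
  also have "\<dots> = sqrt n / (sqrt 2 * (1 + t)) * ((mXW - mX * (n * v)) / (sqrt 2 * sqrt n * v))"
  proof -
    have cancel: "Z / (2 * u * v) = c / (sqrt 2 * u) * (Z / (sqrt 2 * c * v))" if "0 < u" "0 < c" for u c Z
      using that v by (simp add: field_simps)
    show ?thesis using t n by (intro cancel) auto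
  qed
  finally show ?thesis using slope by simp
qed

lemma
  fixes \<theta> :: "real^'n::finite" and X :: "real^'n \<Rightarrow> real"
  assumes s: "0 < s" and [measurable]: "X \<in> borel_measurable borel" and a: "0 \<le> \<alpha>" "\<alpha> \<le> b"
    and i1: "integrable (gauss \<theta> ((1 + b) * s)) X"
    and i2: "integrable (gauss \<theta> ((1 + b) * s)) (\<lambda>y. X y * (norm (y - \<theta>))\<^sup>2)"
  shows set_integrable_gauss_mean_slope: "set_integrable lborel {0..\<alpha>} (gauss_mean_slope \<theta> s X)"
    and gauss_mean_diff_eq_integral:
      "(\<integral>y. X y \<partial>gauss \<theta> ((1 + \<alpha>) * s)) - (\<integral>y. X y \<partial>gauss \<theta> ((1 + 0) * s))
         = (LINT t:{0..\<alpha>}|lborel. gauss_mean_slope \<theta> s X t)"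
proof -
  have p1: "integrable lborel (\<lambda>y. gauss_density \<theta> ((1 + b) * s) y * X y)"
    and p2: "integrable lborel (\<lambda>y. gauss_density \<theta> ((1 + b) * s) y * X y * (norm (y - \<theta>))\<^sup>2)"
    using i1 i2 by (simp_all add: integrable_gauss_iff mult.assoc)
  have slope: "gauss_mean_slope \<theta> s X t = (\<integral>y. X y * gauss_density_deriv \<theta> s t y \<partial>lborel)"
    if "t \<in> {0..\<alpha>}" for t
    using that a i1 i2 s
    by (intro gauss_mean_slope_eq_integral integrable_gauss_smaller_var[OF s, of t b]) auto
  show "set_integrable lborel {0..\<alpha>} (gauss_mean_slope \<theta> s X)"
    using set_integrable_gauss_density_deriv[OF s a _ p1 p2] slope
    by (subst set_integrable_cong[OF refl refl]) auto
  have "(\<integral>y. X y \<partial>gauss \<theta> ((1 + \<alpha>) * s)) - (\<integral>y. X y \<partial>gauss \<theta> ((1 + 0) * s))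
      = (LINT t:{0..\<alpha>}|lborel. \<integral>y. X y * gauss_density_deriv \<theta> s t y \<partial>lborel)"
    using integral_gauss_density_diff_eq[OF s a _ p1 p2] by (simp add: integral_gauss)
  also have "\<dots> = (LINT t:{0..\<alpha>}|lborel. gauss_mean_slope \<theta> s X t)"
    using slope by (intro set_lebesgue_integral_cong) auto
  finally show "(\<integral>y. X y \<partial>gauss \<theta> ((1 + \<alpha>) * s)) - (\<integral>y. X y \<partial>gauss \<theta> ((1 + 0) * s))
      = (LINT t:{0..\<alpha>}|lborel. gauss_mean_slope \<theta> s X t)" .
qed

lemma abs_gauss_mean_slope_le:
  fixes \<theta> :: "real^'n::finite" and X :: "real^'n \<Rightarrow> real"
  assumes [measurable]: "X \<in> borel_measurable borel" and s: "0 < s" and t: "0 \<le> t"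
    and fin: "var_ext (gauss \<theta> ((1 + t) * s)) X < \<infinity>"
  shows "\<bar>gauss_mean_slope \<theta> s X t\<bar>
           \<le> sqrt (real CARD('n)) / sqrt 2 * sqrt (var_real (gauss \<theta> ((1 + t) * s)) X)"
proof -
  have v: "0 < (1 + t) * s" using s t by simp
  have "\<bar>sd_times_cor (gauss \<theta> ((1 + t) * s)) X (\<lambda>y. (norm (y - \<theta>))\<^sup>2)\<bar>
      \<le> sqrt (var_real (gauss \<theta> ((1 + t) * s)) X)"
    using v fin
    by (intro abs_sd_times_cor_le_sqrt_var)
      (auto simp: measurable_gauss var_ext_gauss_sq_dist var_real_gauss_sq_dist zero_less_mult_iff)
  moreover have "sqrt (real CARD('n)) / (sqrt 2 * (1 + t)) \<le> sqrt (real CARD('n)) / sqrt 2"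
    using t by (intro divide_left_mono) (auto simp: mult_le_cancel_left1)
  ultimately show ?thesis
    unfolding gauss_mean_slope_def abs_mult using t
    by (intro mult_mono) auto
qed

lemma abs_gauss_mean_diff_le_if_mono_var:
  fixes \<theta> :: "real^'n::finite" and X :: "real^'n \<Rightarrow> real"
  assumes s: "0 < s" and Xm [measurable]: "X \<in> borel_measurable borel" and a: "0 \<le> \<alpha>" "\<alpha> \<le> b"
    and i1: "integrable (gauss \<theta> ((1 + b) * s)) X"
    and i2: "integrable (gauss \<theta> ((1 + b) * s)) (\<lambda>y. X y * (norm (y - \<theta>))\<^sup>2)"
    and mono: "mono_on {0..\<alpha>} (\<lambda>t. var_ext (gauss \<theta> ((1 + t) * s)) X)"
    and "var_ext (gauss \<theta> ((1 + \<alpha>) * s)) X \<noteq> \<infinity>"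
  shows "\<bar>(\<integral>y. X y \<partial>gauss \<theta> ((1 + \<alpha>) * s)) - (\<integral>y. X y \<partial>gauss \<theta> ((1 + 0) * s))\<bar>
           \<le> sqrt (real CARD('n)) * \<alpha> / sqrt 2 * sqrt (var_real (gauss \<theta> ((1 + \<alpha>) * s)) X)"
proof -
  have fin: "var_ext (gauss \<theta> ((1 + \<alpha>) * s)) X < \<infinity>"
    using assms(8) by (simp add: top.not_eq_extremum)
  have "\<bar>gauss_mean_slope \<theta> s X t\<bar>
      \<le> sqrt (real CARD('n)) / sqrt 2 * sqrt (var_real (gauss \<theta> ((1 + \<alpha>) * s)) X)"
    if t: "t \<in> {0..\<alpha>}" for t
  proof -
    have le: "var_ext (gauss \<theta> ((1 + t) * s)) X \<le> var_ext (gauss \<theta> ((1 + \<alpha>) * s)) X"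
      using mono_onD[OF mono t, of \<alpha>] t a by auto
    then have var_le: "var_real (gauss \<theta> ((1 + t) * s)) X \<le> var_real (gauss \<theta> ((1 + \<alpha>) * s)) X"
      unfolding var_real_def using fin by (intro enn2real_mono) auto
    have "var_ext (gauss \<theta> ((1 + t) * s)) X < \<infinity>"
      using le fin by (rule le_less_trans)
    then have "\<bar>gauss_mean_slope \<theta> s X t\<bar>
        \<le> sqrt (real CARD('n)) / sqrt 2 * sqrt (var_real (gauss \<theta> ((1 + t) * s)) X)"
      using t by (intro abs_gauss_mean_slope_le[OF _ s]) auto
    then show ?thesis
      by (rule order_trans) (intro mult_left_mono real_sqrt_le_mono var_le, simp)
  qed
  then have "\<bar>LINT t:{0..\<alpha>}|lborel. gauss_mean_slope \<theta> s X t\<bar>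
      \<le> sqrt (real CARD('n)) / sqrt 2 * sqrt (var_real (gauss \<theta> ((1 + \<alpha>) * s)) X) * \<alpha>"
    by (rule abs_set_integral_Icc_le[OF a(1) set_integrable_gauss_mean_slope[OF s Xm a i1 i2]])
  then show ?thesis
    unfolding gauss_mean_diff_eq_integral[OF s Xm a i1 i2] by (simp add: field_simps)
qed

lemma gauss_mean_lipschitz:
  fixes \<theta> :: "real^'n::finite" and X :: "real^'n \<Rightarrow> real"
  assumes s: "0 < s" and [measurable]: "X \<in> borel_measurable borel"
    and i1: "integrable (gauss \<theta> ((1 + b) * s)) X"
    and i2: "integrable (gauss \<theta> ((1 + b) * s)) (\<lambda>y. X y * (norm (y - \<theta>))\<^sup>2)"
  obtains M where "0 \<le> M" and "\<And>t. 0 \<le> t \<Longrightarrow> t \<le> b \<Longrightarrow>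
    \<bar>(\<integral>y. X y \<partial>gauss \<theta> ((1 + t) * s)) - (\<integral>y. X y \<partial>gauss \<theta> ((1 + 0) * s))\<bar> \<le> M * t"
proof -
  have p1: "integrable lborel (\<lambda>y. gauss_density \<theta> ((1 + b) * s) y * X y)"
    and p2: "integrable lborel (\<lambda>y. gauss_density \<theta> ((1 + b) * s) y * X y * (norm (y - \<theta>))\<^sup>2)"
    using i1 i2 by (simp_all add: integrable_gauss_iff mult.assoc)
  define M where "M = (\<integral>y. gauss_density_deriv_majorant \<theta> s b X y \<partial>lborel)"
  have majorant_int: "integrable lborel (gauss_density_deriv_majorant \<theta> s b X)"
    by (rule integrable_gauss_density_deriv_majorant[OF s _ p1 p2]) simp
  note majorant_nonneg = gauss_density_deriv_majorant_nonneg[OF s, of \<theta> b X]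
  note majorant_bound = abs_mult_gauss_density_deriv_le[OF s, of _ b X _ \<theta>]
  have "0 \<le> M" unfolding M_def using majorant_nonneg by (intro integral_nonneg_AE) auto
  moreover have "\<bar>(\<integral>y. X y \<partial>gauss \<theta> ((1 + t) * s)) - (\<integral>y. X y \<partial>gauss \<theta> ((1 + 0) * s))\<bar> \<le> M * t"
    if t: "0 \<le> t" "t \<le> b" for t
  proof -
    have "\<bar>gauss_mean_slope \<theta> s X u\<bar> \<le> M" if u: "u \<in> {0..t}" for u
    proof -
      have "gauss_mean_slope \<theta> s X u = (\<integral>y. X y * gauss_density_deriv \<theta> s u y \<partial>lborel)"
        using u t s i1 i2
        by (intro gauss_mean_slope_eq_integral integrable_gauss_smaller_var[OF s, of u b]) auto
      also have "\<bar>\<dots>\<bar> \<le> (\<integral>y. \<bar>X y * gauss_density_deriv \<theta> s u y\<bar> \<partial>lborel)"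
        by (rule integral_abs_bound)
      also have "\<dots> \<le> M"
        unfolding M_def using u t majorant_int majorant_nonneg majorant_bound
        by (intro integral_mono_AE' AE_I2) auto
      finally show ?thesis .
    qed
    then show ?thesis
      using abs_set_integral_Icc_le[OF t(1) set_integrable_gauss_mean_slope[OF s _ t i1 i2]]
        gauss_mean_diff_eq_integral[OF s _ t i1 i2]
      by simp
  qed
  ultimately show ?thesis by (rule that)
qed

lemma var_gauss_eq_moments:
  fixes \<theta> :: "real^'n::finite" and X :: "real^'n \<Rightarrow> real"
  assumes s: "0 < s" and t: "0 \<le> t" "t \<le> b" and Xm [measurable]: "X \<in> borel_measurable borel"
    and j0: "integrable (gauss \<theta> ((1 + b) * s)) X"
    and j1: "integrable (gauss \<theta> ((1 + b) * s)) (\<lambda>y. (X y)\<^sup>2)"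
  shows "var_ext (gauss \<theta> ((1 + t) * s)) X < \<infinity>"
    and "var_real (gauss \<theta> ((1 + t) * s)) X
           = (\<integral>y. (X y)\<^sup>2 \<partial>gauss \<theta> ((1 + t) * s)) - (\<integral>y. X y \<partial>gauss \<theta> ((1 + t) * s))\<^sup>2"
proof -
  have "0 < (1 + t) * s" using s t by simp
  note V = prob_space.var_ext_eq_moments[OF prob_space_gauss[OF this] measurable_gauss[OF Xm]]
  note I = integrable_gauss_smaller_var[OF s t]
  show "var_ext (gauss \<theta> ((1 + t) * s)) X < \<infinity>"
    and "var_real (gauss \<theta> ((1 + t) * s)) X
           = (\<integral>y. (X y)\<^sup>2 \<partial>gauss \<theta> ((1 + t) * s)) - (\<integral>y. X y \<partial>gauss \<theta> ((1 + t) * s))\<^sup>2"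
    using V[OF I[OF Xm j0] I[OF _ j1]] by simp_all
qed

lemma var_real_gauss_le_linear:
  fixes \<theta> :: "real^'n::finite" and X :: "real^'n \<Rightarrow> real"
  assumes s: "0 < s" and b: "0 \<le> b" and [measurable]: "X \<in> borel_measurable borel"
    and i1: "integrable (gauss \<theta> ((1 + b) * s)) X"
    and i2: "integrable (gauss \<theta> ((1 + b) * s)) (\<lambda>y. X y * (norm (y - \<theta>))\<^sup>2)"
    and j1: "integrable (gauss \<theta> ((1 + b) * s)) (\<lambda>y. (X y)\<^sup>2)"
    and j2: "integrable (gauss \<theta> ((1 + b) * s)) (\<lambda>y. (X y)\<^sup>2 * (norm (y - \<theta>))\<^sup>2)"
  obtains C where "0 \<le> C" and "\<And>t. 0 \<le> t \<Longrightarrow> t \<le> b \<Longrightarrow>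
    var_real (gauss \<theta> ((1 + t) * s)) X \<le> var_real (gauss \<theta> ((1 + 0) * s)) X + C * t"
proof -
  define E1 where "E1 t = (\<integral>y. X y \<partial>gauss \<theta> ((1 + t) * s))" for t
  define E2 where "E2 t = (\<integral>y. (X y)\<^sup>2 \<partial>gauss \<theta> ((1 + t) * s))" for t
  obtain M1 where M1: "0 \<le> M1" "\<And>t. 0 \<le> t \<Longrightarrow> t \<le> b \<Longrightarrow> \<bar>E1 t - E1 0\<bar> \<le> M1 * t"
    using gauss_mean_lipschitz[OF s _ i1 i2] unfolding E1_def by auto
  obtain M2 where M2: "0 \<le> M2" "\<And>t. 0 \<le> t \<Longrightarrow> t \<le> b \<Longrightarrow> \<bar>E2 t - E2 0\<bar> \<le> M2 * t"
    using gauss_mean_lipschitz[OF s _ j1 j2] unfolding E2_def by auto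
  define C where "C = M2 + M1 * (2 * \<bar>E1 0\<bar> + M1 * b)"
  have "0 \<le> C" unfolding C_def using M1 M2 b by simp
  moreover have "var_real (gauss \<theta> ((1 + t) * s)) X \<le> var_real (gauss \<theta> ((1 + 0) * s)) X + C * t"
    if t: "0 \<le> t" "t \<le> b" for t
  proof -
    have "\<bar>E1 t + E1 0\<bar> \<le> 2 * \<bar>E1 0\<bar> + M1 * b"
      using M1(2)[OF t] mult_left_mono[OF t(2) M1(1)] by linarith
    then have "\<bar>E1 t - E1 0\<bar> * \<bar>E1 t + E1 0\<bar> \<le> (M1 * t) * (2 * \<bar>E1 0\<bar> + M1 * b)"
      by (rule mult_mono[OF M1(2)[OF t]]) (use M1 t in simp_all)
    then have "- ((E1 t - E1 0) * (E1 t + E1 0)) \<le> (M1 * t) * (2 * \<bar>E1 0\<bar> + M1 * b)"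
      by (simp add: abs_mult[symmetric])
    moreover have "var_real (gauss \<theta> ((1 + t) * s)) X - var_real (gauss \<theta> ((1 + 0) * s)) X
        = (E2 t - E2 0) - (E1 t - E1 0) * (E1 t + E1 0)"
      using var_gauss_eq_moments(2)[OF s t _ i1 j1] var_gauss_eq_moments(2)[OF s _ b _ i1 j1]
      unfolding E1_def E2_def by (simp add: power2_eq_square algebra_simps)
    ultimately show ?thesis
      using M2(2)[OF t] unfolding C_def by (simp add: algebra_simps)
  qed
  ultimately show ?thesis by (rule that)
qed

lemma abs_gauss_mean_diff_le_three_halves:
  fixes \<theta> :: "real^'n::finite" and X :: "real^'n \<Rightarrow> real"
  assumes s: "0 < s" and b: "0 \<le> b" and Xm [measurable]: "X \<in> borel_measurable borel"
    and i1: "integrable (gauss \<theta> ((1 + b) * s)) X"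
    and i2: "integrable (gauss \<theta> ((1 + b) * s)) (\<lambda>y. X y * (norm (y - \<theta>))\<^sup>2)"
    and j1: "integrable (gauss \<theta> ((1 + b) * s)) (\<lambda>y. (X y)\<^sup>2)"
    and j2: "integrable (gauss \<theta> ((1 + b) * s)) (\<lambda>y. (X y)\<^sup>2 * (norm (y - \<theta>))\<^sup>2)"
  shows "\<exists>C>0. \<forall>\<alpha>. 0 \<le> \<alpha> \<and> \<alpha> \<le> b \<longrightarrow>
    \<bar>(\<integral>y. X y \<partial>gauss \<theta> ((1 + \<alpha>) * s)) - (\<integral>y. X y \<partial>gauss \<theta> ((1 + 0) * s))\<bar>
      \<le> sqrt (real CARD('n)) * \<alpha> / sqrt 2 * sqrt (var_real (gauss \<theta> s) X) + C * \<alpha> powr (3/2)"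
proof -
  define c where "c = sqrt (real CARD('n)) / sqrt 2"
  define V where "V t = var_real (gauss \<theta> ((1 + t) * s)) X" for t
  obtain C where C: "0 \<le> C" "\<And>t. 0 \<le> t \<Longrightarrow> t \<le> b \<Longrightarrow> V t \<le> V 0 + C * t"
    using var_real_gauss_le_linear[OF s b Xm i1 i2 j1 j2] unfolding V_def by auto
  have c: "0 \<le> c" unfolding c_def by simp
  have "\<bar>(\<integral>y. X y \<partial>gauss \<theta> ((1 + \<alpha>) * s)) - (\<integral>y. X y \<partial>gauss \<theta> ((1 + 0) * s))\<bar>
      \<le> sqrt (real CARD('n)) * \<alpha> / sqrt 2 * sqrt (V 0) + (c * sqrt C + 1) * \<alpha> powr (3/2)"
    if a: "0 \<le> \<alpha>" "\<alpha> \<le> b" for \<alpha>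
  proof -
    have "\<bar>gauss_mean_slope \<theta> s X t\<bar> \<le> c * (sqrt (V 0) + sqrt C * sqrt \<alpha>)" if t: "t \<in> {0..\<alpha>}" for t
    proof -
      have "\<bar>gauss_mean_slope \<theta> s X t\<bar> \<le> c * sqrt (V t)"
        unfolding c_def V_def using t a
        by (intro abs_gauss_mean_slope_le[OF Xm s] var_gauss_eq_moments(1)[OF s _ _ Xm i1 j1]) auto
      also have "\<dots> \<le> c * sqrt (V 0 + C * \<alpha>)"
      proof (intro mult_left_mono[OF _ c] real_sqrt_le_mono)
        show "V t \<le> V 0 + C * \<alpha>"
          using C(2)[of t] mult_left_mono[of t \<alpha> C] C(1) t a by auto
      qed
      also have "\<dots> \<le> c * (sqrt (V 0) + sqrt C * sqrt \<alpha>)"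
        using C a sqrt_add_le_add_sqrt[of "V 0" "C * \<alpha>"]
        by (intro mult_left_mono[OF _ c]) (auto simp: V_def real_sqrt_mult)
      finally show ?thesis .
    qed
    then have "\<bar>LINT t:{0..\<alpha>}|lborel. gauss_mean_slope \<theta> s X t\<bar> \<le> c * (sqrt (V 0) + sqrt C * sqrt \<alpha>) * \<alpha>"
      by (rule abs_set_integral_Icc_le[OF a(1) set_integrable_gauss_mean_slope[OF s Xm a i1 i2]])
    also have "\<dots> \<le> sqrt (real CARD('n)) * \<alpha> / sqrt 2 * sqrt (V 0) + (c * sqrt C + 1) * \<alpha> powr (3/2)"
      using a c by (simp add: c_def powr_three_halves field_simps)
    finally show ?thesis
      unfolding gauss_mean_diff_eq_integral[OF s Xm a i1 i2] .
  qed
  moreover have "0 < c * sqrt C + 1"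
    using c C by (simp add: add_nonneg_pos)
  ultimately show ?thesis
    unfolding V_def add_0_right mult_1 by blast
qed

theorem proposition3:
  fixes \<theta> :: "real^'n::finite" and \<sigma>2 \<beta> :: real and g :: "real^'n \<Rightarrow> real^'n"
  assumes "\<sigma>2 > 0"
    and "g \<in> borel_measurable borel"
    and "\<beta> > 0"
    and "integrable (gauss \<theta> ((1 + \<beta>) * \<sigma>2)) (\<lambda>y. (norm (g y))\<^sup>2)"
    and "integrable (gauss \<theta> ((1 + \<beta>) * \<sigma>2)) (\<lambda>y. (norm (g y))\<^sup>2 * (norm (y - \<theta>))\<^sup>2)"
  shows
    "(\<forall>\<alpha>. 0 \<le> \<alpha> \<and> \<alpha> < \<beta> \<longrightarrow>
        set_integrable lborel {0..\<alpha>}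
          (\<lambda>t. sqrt (real CARD('n)) / (sqrt 2 * (1 + t)) *
                sd_times_cor (gauss \<theta> ((1 + t) * \<sigma>2))
                  (\<lambda>y. (norm (\<theta> - g y))\<^sup>2) (\<lambda>y. (norm (y - \<theta>))\<^sup>2))
      \<and> risk \<theta> \<sigma>2 g \<alpha> - risk \<theta> \<sigma>2 g 0 =
          (LINT t:{0..\<alpha>}|lborel. sqrt (real CARD('n)) / (sqrt 2 * (1 + t)) *
                sd_times_cor (gauss \<theta> ((1 + t) * \<sigma>2))
                  (\<lambda>y. (norm (\<theta> - g y))\<^sup>2) (\<lambda>y. (norm (y - \<theta>))\<^sup>2)))
   \<and> (\<forall>\<alpha>. 0 \<le> \<alpha> \<and> \<alpha> < \<beta> \<longrightarrow>
        mono_on {0..\<alpha>} (\<lambda>t. var_ext (gauss \<theta> ((1 + t) * \<sigma>2)) (\<lambda>y. (norm (\<theta> - g y))\<^sup>2)) \<longrightarrow>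
        (var_ext (gauss \<theta> ((1 + \<alpha>) * \<sigma>2)) (\<lambda>y. (norm (\<theta> - g y))\<^sup>2) = \<infinity>
         \<or> \<bar>risk \<theta> \<sigma>2 g \<alpha> - risk \<theta> \<sigma>2 g 0\<bar>
             \<le> sqrt (real CARD('n)) * \<alpha> / sqrt 2 *
                sqrt (var_real (gauss \<theta> ((1 + \<alpha>) * \<sigma>2)) (\<lambda>y. (norm (\<theta> - g y))\<^sup>2))))
   \<and> (integrable (gauss \<theta> ((1 + \<beta>) * \<sigma>2)) (\<lambda>y. (norm (g y))^4) \<and>
      integrable (gauss \<theta> ((1 + \<beta>) * \<sigma>2)) (\<lambda>y. (norm (g y))^4 * (norm (y - \<theta>))\<^sup>2) \<longrightarrow>
      (\<exists>C>0. \<exists>\<delta>>0. \<forall>\<alpha>. 0 \<le> \<alpha> \<and> \<alpha> < \<beta> \<and> \<alpha> \<le> \<delta> \<longrightarrow>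
         \<bar>risk \<theta> \<sigma>2 g \<alpha> - risk \<theta> \<sigma>2 g 0\<bar>
           \<le> sqrt (real CARD('n)) * \<alpha> / sqrt 2 *
              sqrt (var_real (gauss \<theta> \<sigma>2) (\<lambda>y. (norm (\<theta> - g y))\<^sup>2))
             + C * \<alpha> powr (3/2)))"
proof -
  note s = assms(1) and [measurable] = assms(2)
  define f where "f = (\<lambda>y. (norm (\<theta> - g y))\<^sup>2)"
  have f [measurable]: "f \<in> borel_measurable borel"
    unfolding f_def by measurable
  have v: "0 < (1 + \<beta>) * \<sigma>2"
    using assms(1,3) by simp
  have i: "integrable (gauss \<theta> ((1 + \<beta>) * \<sigma>2)) f"
    "integrable (gauss \<theta> ((1 + \<beta>) * \<sigma>2)) (\<lambda>y. f y * (norm (y - \<theta>))\<^sup>2)"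
    using integrable_gauss_norm_diff_power[OF v assms(2,4,5)] unfolding f_def by auto
  have j: "integrable (gauss \<theta> ((1 + \<beta>) * \<sigma>2)) (\<lambda>y. (f y)\<^sup>2)"
    "integrable (gauss \<theta> ((1 + \<beta>) * \<sigma>2)) (\<lambda>y. (f y)\<^sup>2 * (norm (y - \<theta>))\<^sup>2)"
    if "integrable (gauss \<theta> ((1 + \<beta>) * \<sigma>2)) (\<lambda>y. norm (g y) ^ 4)"
      "integrable (gauss \<theta> ((1 + \<beta>) * \<sigma>2)) (\<lambda>y. norm (g y) ^ 4 * (norm (y - \<theta>))\<^sup>2)"
    using integrable_gauss_norm_diff_power[OF v assms(2) that] unfolding f_def by auto
  show ?thesis
    unfolding risk_def gauss_mean_slope_def[symmetric] f_def[symmetric]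
  proof (intro conjI allI impI, goal_cases)
    case (1 \<alpha>)
    then show ?case by (intro set_integrable_gauss_mean_slope[OF s f _ _ i]) auto
  next
    case (2 \<alpha>)
    then show ?case by (intro gauss_mean_diff_eq_integral[OF s f _ _ i]) auto
  next
    case (3 \<alpha>)
    then have "0 \<le> \<alpha>" "\<alpha> \<le> \<beta>" by auto
    with 3 show ?case using abs_gauss_mean_diff_le_if_mono_var[OF s f _ _ i] by blast
  next
    case 4
    then show ?case
      using abs_gauss_mean_diff_le_three_halves[OF s _ f i j] assms(3)
      by (meson less_imp_le)
  qed
qed

end
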